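(* Let $\tau\in\mathscr C^r(\mathbb{S}^1,\mathbb{R})$ and $R>\|\tau'\|_\infty$. For all integers $n,m\ge1$, $\mathcal N(\tau,R;n+m)\le\mathcal N(\tau,R'_m;n)\cdot\mathcal N(\tau,R;m)\le\mathcal N(\tau,R;n)\cdot\mathcal N(\tau,R;m)$, where $R'_m=\|\tau'\|_\infty+\lambda^{-m}(R-\|\tau'\|_\infty)$. Consequently $\lim_{n\to\infty}\mathcal N(\tau,R;n)^{1/n}$ exists, equals $\inf_n\mathcal N(\tau,R;n)^{1/n}$, and is independent of the choice of $R>\|\tau'\|_\infty$.
   Context: Let $\mathbb{S}^1=\mathbb{R}/\mathbb{Z}$, $\mathbb{T}^2=\mathbb{S}^1\times\mathbb{S}^1$, $r\ge2$. Let $E:\mathbb{S}^1\to\mathbb{S}^1$ be a $\mathscr C^r$ expanding map of degree $\ell\ge2$ with $1<\lambda\le E'(x)\le\Lambda$ for all $x$. For $\tau\in\mathscr C^r(\mathbb{S}^1,\mathbb{R})$ let $f(x,s)=(E(x),s+\tau(x)\bmod1)$ on $\mathbb{T}^2$. For $R>0$ set $\vartheta_R=R/(\lambda-1)$ and $\mathscr K_R=\{(\xi,\eta)\in\mathbb{R}^2:|\eta|\le\vartheta_R|\xi|\}$. For $R>\|\tau'\|_\infty$ and $n\ge1$, $\mathcal N(\tau,R;n)=\sup_{z\in\mathbb{T}^2}\sup_{v}\#\{\zeta\in f^{-n}(z): v\in Df^n(\zeta)\mathscr K_R\}$, $\sup_v$ over unit vectors $v\in\mathbb{R}^2$. *)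

theory Defs
  imports "HOL-Analysis.Analysis"
begin

text \<open>Functions on the circle S^1 = R/Z are represented by their lifts to the real line.
  The torus T^2 is represented by the fundamental domain [0,1) x [0,1).\<close>

definition C_r :: "nat \<Rightarrow> (real \<Rightarrow> real) \<Rightarrow> bool" where
  "C_r r g \<longleftrightarrow>
     (\<forall>k<r. \<forall>x. ((deriv ^^ k) g has_real_derivative (deriv ^^ Suc k) g x) (at x))
     \<and> continuous_on UNIV ((deriv ^^ r) g)"

definition periodic1 :: "(real \<Rightarrow> real) \<Rightarrow> bool" where
  "periodic1 g \<longleftrightarrow> (\<forall>x. g (x + 1) = g x)"

definition expanding_lift :: "nat \<Rightarrow> (real \<Rightarrow> real) \<Rightarrow> nat \<Rightarrow> real \<Rightarrow> real \<Rightarrow> bool" where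
  "expanding_lift r E l lam Lam \<longleftrightarrow>
     C_r r E \<and> (\<forall>x. E (x + 1) = E x + real l) \<and> 1 < lam \<and>
     (\<forall>x. lam \<le> deriv E x \<and> deriv E x \<le> Lam)"

definition sup_norm_deriv :: "(real \<Rightarrow> real) \<Rightarrow> real" where
  "sup_norm_deriv g = (SUP x. \<bar>deriv g x\<bar>)"

definition Tor :: "(real \<times> real) set" where
  "Tor = {0..<1} \<times> {0..<1}"

definition fmap :: "(real \<Rightarrow> real) \<Rightarrow> (real \<Rightarrow> real) \<Rightarrow> real \<times> real \<Rightarrow> real \<times> real" where
  "fmap E \<tau> p = (frac (E (fst p)), frac (snd p + \<tau> (fst p)))"

definition Dfmap :: "(real \<Rightarrow> real) \<Rightarrow> (real \<Rightarrow> real) \<Rightarrow> real \<times> real \<Rightarrow> real \<times> real \<Rightarrow> real \<times> real" where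
  "Dfmap E \<tau> p w = (deriv E (fst p) * fst w, deriv \<tau> (fst p) * fst w + snd w)"

fun Dfn :: "(real \<Rightarrow> real) \<Rightarrow> (real \<Rightarrow> real) \<Rightarrow> nat \<Rightarrow> real \<times> real \<Rightarrow> real \<times> real \<Rightarrow> real \<times> real" where
  "Dfn E \<tau> 0 p = id"
| "Dfn E \<tau> (Suc n) p = Dfmap E \<tau> ((fmap E \<tau> ^^ n) p) \<circ> Dfn E \<tau> n p"

definition theta :: "real \<Rightarrow> real \<Rightarrow> real" where
  "theta lam R = R / (lam - 1)"

definition cone :: "real \<Rightarrow> real \<Rightarrow> (real \<times> real) set" where
  "cone lam R = {(\<xi>, \<eta>). \<bar>\<eta>\<bar> \<le> theta lam R * \<bar>\<xi>\<bar>}"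

definition Ncount :: "(real \<Rightarrow> real) \<Rightarrow> (real \<Rightarrow> real) \<Rightarrow> real \<Rightarrow> real \<Rightarrow> nat \<Rightarrow> real" where
  "Ncount E \<tau> lam R n =
     (SUP z\<in>Tor. SUP v\<in>{v :: real \<times> real. norm v = 1}.
        real (card {\<zeta>\<in>Tor. (fmap E \<tau> ^^ n) \<zeta> = z \<and> v \<in> Dfn E \<tau> n \<zeta> ` cone lam R}))"

end

theory Submission
  imports Defs
begin

text \<open>Write \<open>N(\<rho>, n)\<close> for \<open>\<N>(\<tau>, \<rho>; n)\<close>. Since \<open>Df\<close> is lower triangular with diagonal entries
  \<open>E' \<ge> \<lambda>\<close> and \<open>1\<close>, it maps the cone of aperture \<open>\<vartheta>\<^sub>\<rho>\<close> into the cone of aperture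
  \<open>\<vartheta>\<^sub>\<rho>'\<close> with \<open>\<rho>' = S + (\<rho> - S)/\<lambda>\<close>, \<open>S \<ge> |\<tau>'|\<close>. Splitting an orbit of length \<open>n + m\<close> into its
  first \<open>m\<close> and last \<open>n\<close> steps, the preimages counted by \<open>N(R, n + m)\<close> are mapped by \<open>f\<^sup>m\<close> to
  preimages counted by \<open>N(R'\<^sub>m, n)\<close>, and since \<open>Df\<^sup>n\<close> is injective, each fibre of this map is
  counted by \<open>N(R, m)\<close>. This gives submultiplicativity, so Fekete's lemma yields the limit
  of \<open>N(R, n)\<^sup>1\<^sup>/\<^sup>n\<close>. For \<open>R\<^sub>1, R\<^sub>2 > S\<close>, taking \<open>m\<close> so large that \<open>R'\<^sub>m \<le> R\<^sub>2\<close> gives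
  \<open>N(R\<^sub>1, n + m) \<le> N(R\<^sub>2, n) N(R\<^sub>1, m)\<close>, whence the limit for \<open>R\<^sub>1\<close> is at most the one for \<open>R\<^sub>2\<close>.\<close>


lemma C_r_has_real_derivative:
  assumes "C_r r g" "1 \<le> r"
  shows "(g has_real_derivative deriv g x) (at x)"
proof -
  have "((deriv ^^ 0) g has_real_derivative (deriv ^^ Suc 0) g x) (at x)"
    using assms unfolding C_r_def by auto
  then show ?thesis by simp
qed

lemma C_r_isCont_deriv:
  assumes "C_r r g" "1 \<le> r"
  shows "isCont (deriv g) x"
proof (cases "r = 1")
  case True
  then show ?thesis
    using assms(1) unfolding C_r_def by (simp add: continuous_on_eq_continuous_at)
next
  case False
  then have "1 < r" using assms(2) by simp
  then have "((deriv ^^ 1) g has_real_derivative (deriv ^^ Suc 1) g x) (at x)"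
    using assms(1) unfolding C_r_def by blast
  then show ?thesis by (simp add: DERIV_isCont)
qed

lemma deriv_periodic1:
  assumes d: "\<And>x. (g has_real_derivative deriv g x) (at x)" and p: "periodic1 g"
  shows "deriv g (x + 1) = deriv g x"
proof -
  have "((\<lambda>y. g (y + 1)) has_real_derivative deriv g (x + 1)) (at x)"
    using d[of "x + 1"] by (simp add: DERIV_shift)
  moreover have "(\<lambda>y. g (y + 1)) = g" using p by (auto simp: periodic1_def)
  ultimately show ?thesis using d[of x] by (simp add: DERIV_unique)
qed

lemma abs_deriv_le_sup_norm_deriv:
  assumes "C_r r g" "1 \<le> r" "periodic1 g"
  shows "\<bar>deriv g x\<bar> \<le> sup_norm_deriv g"
proof -
  interpret periodic_fun_simple' "\<lambda>x. \<bar>deriv g x\<bar>"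
    by standard (simp add: deriv_periodic1[OF C_r_has_real_derivative[OF assms(1,2)] assms(3)])
  have "continuous_on {0..1} (\<lambda>x. \<bar>deriv g x\<bar>)"
    using C_r_isCont_deriv[OF assms(1,2)]
    by (intro continuous_at_imp_continuous_on continuous_intros) auto
  then have "bdd_above ((\<lambda>x. \<bar>deriv g x\<bar>) ` {0..1})"
    by (intro bounded_imp_bdd_above compact_imp_bounded compact_continuous_image) auto
  then obtain B where B: "\<forall>y\<in>{0..1}. \<bar>deriv g y\<bar> \<le> B"
    by (auto simp: bdd_above_def)
  have "\<bar>deriv g y\<bar> \<le> B" for y
  proof -
    have "\<bar>deriv g y\<bar> = \<bar>deriv g (frac y)\<bar>"
      using plus_of_int[of "frac y" "\<lfloor>y\<rfloor>"] by (simp add: frac_def)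
    also have "\<dots> \<le> B"
      using B frac_ge_0[of y] frac_lt_1[of y] by simp
    finally show ?thesis .
  qed
  then show ?thesis
    unfolding sup_norm_deriv_def by (intro cSUP_upper bdd_aboveI2) auto
qed

lemma eq_if_frac_eq_abs_diff_less_1:
  fixes a b :: real
  assumes "frac a = frac b" "\<bar>a - b\<bar> < 1"
  shows "a = b"
proof -
  obtain n where "a = b + of_int n" using frac_eqE[OF assms(1)] .
  moreover have "n = 0" using assms(2) calculation by simp
  ultimately show ?thesis by simp
qed

lemma subadditive_le_div_mult_sum:
  fixes u :: "nat \<Rightarrow> real"
  assumes sub: "\<And>n m. 1 \<le> n \<Longrightarrow> 1 \<le> m \<Longrightarrow> u (n + m) \<le> u n + u m"
    and nonneg: "\<And>n. 0 \<le> u n" and k: "1 \<le> k" and n: "1 \<le> n"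
  shows "u n \<le> real (n div k) * u k + (\<Sum>r=1..k. u r)"
  using n
proof (induction n rule: less_induct)
  case (less n)
  consider "n \<le> k" | "k < n" by linarith
  then show ?case
  proof cases
    case 1
    have "u n \<le> (\<Sum>r=1..k. u r)"
      using 1 less.prems nonneg by (intro member_le_sum) auto
    then show ?thesis using nonneg[of k] by (simp add: add_increasing)
  next
    case 2
    have "u n \<le> u (n - k) + u k" using sub[of "n - k" k] 2 k by simp
    moreover have "u (n - k) \<le> real ((n - k) div k) * u k + (\<Sum>r=1..k. u r)"
      using less.IH[of "n - k"] 2 k by simp
    moreover have "real (n div k) = real ((n - k) div k) + 1" using 2 k by (simp add: le_div_geq)
    ultimately show ?thesis by (simp add: algebra_simps)
  qed
qed

lemma fekete_subadditive:
  fixes u :: "nat \<Rightarrow> real"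
  assumes sub: "\<And>n m. 1 \<le> n \<Longrightarrow> 1 \<le> m \<Longrightarrow> u (n + m) \<le> u n + u m"
    and nonneg: "\<And>n. 0 \<le> u n"
  shows "(\<lambda>n. u n / real n) \<longlonglongrightarrow> (INF n\<in>{1..}. u n / real n)"
proof (rule LIMSEQ_I)
  define L where "L = (INF n\<in>{1..}. u n / real n)"
  have bdd: "bdd_below ((\<lambda>n. u n / real n) ` {1..})"
    by (rule bdd_belowI2[where m=0]) (simp add: nonneg)
  fix r :: real assume r: "0 < r"
  obtain k where k: "1 \<le> k" "u k / real k < L + r / 2"
    using cINF_less_iff[OF _ bdd, of "L + r / 2"] r unfolding L_def by auto
  define C where "C = (\<Sum>r=1..k. u r)"
  obtain N where N: "\<And>n. N \<le> n \<Longrightarrow> C / real n < r / 2"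
    using order_tendstoD(2)[OF lim_const_over_n[of C], of "r / 2"] r
    unfolding eventually_sequentially by auto
  show "\<exists>no. \<forall>n\<ge>no. norm (u n / real n - L) < r"
  proof (intro exI allI impI)
    fix n assume "max N 1 \<le> n"
    then have n: "N \<le> n" "1 \<le> n" by auto
    have "real (n div k) * u k \<le> real n / real k * u k"
      by (intro mult_right_mono of_nat_div_le_of_nat nonneg)
    then have "u n \<le> real n / real k * u k + C"
      using subadditive_le_div_mult_sum[OF sub nonneg k(1) n(2)] unfolding C_def by linarith
    then have "u n / real n \<le> (real n / real k * u k + C) / real n"
      by (rule divide_right_mono) simp
    also have "\<dots> = u k / real k + C / real n"
      using n(2) by (simp add: add_divide_distrib)
    finally have "u n / real n \<le> u k / real k + C / real n" .
    moreover have "L \<le> u n / real n"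
      unfolding L_def by (rule cINF_lower[OF bdd]) (use n in simp)
    ultimately show "norm (u n / real n - L) < r"
      using k(2) N[OF n(1)] unfolding real_norm_def abs_less_iff by linarith
  qed
qed

lemma submultiplicative_root_tendsto:
  fixes a :: "nat \<Rightarrow> real"
  assumes sub: "\<And>n m. 1 \<le> n \<Longrightarrow> 1 \<le> m \<Longrightarrow> a (n + m) \<le> a n * a m"
    and ge1: "\<And>n. 1 \<le> a n"
  shows "(\<lambda>n. a n powr (1 / real n)) \<longlonglongrightarrow> (INF n\<in>{1..}. a n powr (1 / real n))"
proof -
  define \<Lambda> where "\<Lambda> = (INF n\<in>{1..}. ln (a n) / real n)"
  have pos: "0 < a n" for n using ge1[of n] by simp
  have root_eq: "a n powr (1 / real n) = exp (ln (a n) / real n)" for n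
    using pos[of n] by (simp add: powr_def)
  have "(\<lambda>n. ln (a n) / real n) \<longlonglongrightarrow> \<Lambda>"
    unfolding \<Lambda>_def
  proof (rule fekete_subadditive)
    fix n m :: nat assume "1 \<le> n" "1 \<le> m"
    then have "ln (a (n + m)) \<le> ln (a n * a m)"
      using sub pos by simp
    then show "ln (a (n + m)) \<le> ln (a n) + ln (a m)"
      using pos[of n] pos[of m] by (simp add: ln_mult)
  qed (use ge1 in simp)
  then have lim: "(\<lambda>n. a n powr (1 / real n)) \<longlonglongrightarrow> exp \<Lambda>"
    unfolding root_eq by (rule tendsto_exp)
  have bdd_ln: "bdd_below ((\<lambda>n. ln (a n) / real n) ` {1..})"
    by (rule bdd_belowI2[where m=0]) (simp add: ge1)
  have bdd_root: "bdd_below ((\<lambda>n. a n powr (1 / real n)) ` {1..})"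
    by (rule bdd_belowI2[where m=0]) simp
  have "\<Lambda> \<le> ln (a n) / real n" if "1 \<le> n" for n
    unfolding \<Lambda>_def by (rule cINF_lower[OF bdd_ln]) (use that in simp)
  then have "exp \<Lambda> \<le> (INF n\<in>{1..}. a n powr (1 / real n))"
    by (intro cINF_greatest) (auto simp: root_eq)
  moreover have "(INF n\<in>{1..}. a n powr (1 / real n)) \<le> exp \<Lambda>"
  proof (rule LIMSEQ_le_const[OF lim], intro exI allI impI)
    fix n :: nat assume "1 \<le> n"
    then show "(INF n\<in>{1..}. a n powr (1 / real n)) \<le> a n powr (1 / real n)"
      by (intro cINF_lower[OF bdd_root]) simp
  qed
  ultimately show ?thesis using lim by simp
qed

lemma root_limit_le_of_shifted_le:
  fixes a b :: "nat \<Rightarrow> real"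
  assumes lim_a: "(\<lambda>n. a n powr (1 / real n)) \<longlonglongrightarrow> La"
    and lim_b: "(\<lambda>n. b n powr (1 / real n)) \<longlonglongrightarrow> Lb"
    and b_ge1: "\<And>n. 1 \<le> b n" and a_pos: "\<And>n. 0 < a n"
    and shift: "\<And>j. 1 \<le> j \<Longrightarrow> a (j + m) \<le> b j * a m"
  shows "La \<le> Lb"
proof (rule LIMSEQ_le)
  show "(\<lambda>j. a (j + m) powr (1 / real (j + m))) \<longlonglongrightarrow> La"
    using LIMSEQ_ignore_initial_segment[OF lim_a] .
  have "(\<lambda>j. 1 / real (j + m)) \<longlonglongrightarrow> 0"
    using LIMSEQ_ignore_initial_segment[OF lim_const_over_n[of 1]] .
  then have "(\<lambda>j. a m powr (1 / real (j + m))) \<longlonglongrightarrow> a m powr 0"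
    using a_pos[of m] by (intro tendsto_powr) auto
  then show "(\<lambda>j. b j powr (1 / real j) * a m powr (1 / real (j + m))) \<longlonglongrightarrow> Lb"
    using tendsto_mult[OF lim_b] a_pos[of m] by fastforce
  show "\<exists>N. \<forall>j\<ge>N. a (j + m) powr (1 / real (j + m))
                   \<le> b j powr (1 / real j) * a m powr (1 / real (j + m))"
  proof (intro exI allI impI)
    fix j :: nat assume j: "1 \<le> j"
    have "a (j + m) powr (1 / real (j + m)) \<le> (b j * a m) powr (1 / real (j + m))"
      using shift[OF j] a_pos[of "j + m"] by (intro powr_mono2) auto
    also have "\<dots> = b j powr (1 / real (j + m)) * a m powr (1 / real (j + m))"
      using a_pos[of m] b_ge1[of j] by (simp add: powr_mult)
    also have "\<dots> \<le> b j powr (1 / real j) * a m powr (1 / real (j + m))"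
      using j b_ge1[of j] by (intro mult_right_mono powr_mono) (auto simp: frac_le)
    finally show "a (j + m) powr (1 / real (j + m))
                   \<le> b j powr (1 / real j) * a m powr (1 / real (j + m))" .
  qed
qed

lemma card_le_card_mult_fibre_bound:
  fixes g :: "'a \<Rightarrow> 'b"
  assumes "finite A" "finite B" "g ` A \<subseteq> B" "0 \<le> N"
    and fibre: "\<And>w. w \<in> g ` A \<Longrightarrow> real (card {x\<in>A. g x = w}) \<le> N"
  shows "real (card A) \<le> real (card B) * N"
proof -
  have "A = (\<Union>w\<in>g ` A. {x\<in>A. g x = w})" by auto
  then have "card A \<le> (\<Sum>w\<in>g ` A. card {x\<in>A. g x = w})"
    using card_UN_le[of "g ` A" "\<lambda>w. {x\<in>A. g x = w}"] assms(1) by simp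
  then have "real (card A) \<le> (\<Sum>w\<in>g ` A. real (card {x\<in>A. g x = w}))"
    by (metis of_nat_le_iff of_nat_sum)
  also have "\<dots> \<le> real (card (g ` A)) * N"
    using sum_bounded_above[of "g ` A", OF fibre] by simp
  also have "\<dots> \<le> real (card B) * N"
    using card_mono[OF assms(2,3)] assms(4) by (simp add: mult_right_mono)
  finally show ?thesis .
qed

lemma unit_vectors_nonempty: "{v :: real \<times> real. norm v = 1} \<noteq> {}"
proof -
  have "norm (1 :: real, 0 :: real) = 1" by (simp add: norm_Pair)
  then show ?thesis by blast
qed

locale skew_product =
  fixes E \<tau> :: "real \<Rightarrow> real" and l :: nat and lam S :: real
  assumes E_has_deriv: "\<And>x. (E has_real_derivative deriv E x) (at x)"
    and E_lift: "\<And>x. E (x + 1) = E x + real l"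
    and degree_pos: "1 \<le> l"
    and lam_gt_1: "1 < lam"
    and deriv_E_ge: "\<And>x. lam \<le> deriv E x"
    and abs_deriv_tau_le: "\<And>x. \<bar>deriv \<tau> x\<bar> \<le> S"
begin

abbreviation f :: "real \<times> real \<Rightarrow> real \<times> real" where
  "f \<equiv> fmap E \<tau>"

lemma S_nonneg: "0 \<le> S"
  using abs_deriv_tau_le[of 0] by linarith

lemma strict_mono_E: "strict_mono E"
proof (rule strict_monoI)
  fix x y :: real assume "x < y"
  then show "E x < E y"
  proof (rule DERIV_pos_imp_increasing)
    fix t show "\<exists>d. (E has_real_derivative d) (at t) \<and> 0 < d"
      using E_has_deriv[of t] deriv_E_ge[of t] lam_gt_1 by force
  qed
qed

lemma E_bounds_on_unit_interval:
  assumes "0 \<le> x" "x < 1"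
  shows "E 0 \<le> E x" "E x < E 0 + real l"
  using strict_mono_less_eq[OF strict_mono_E, of 0 x] strict_monoD[OF strict_mono_E, of x 1]
    assms E_lift[of 0] by auto

lemma fmap_in_Tor: "f p \<in> Tor"
  by (simp add: fmap_def Tor_def frac_lt_1)

lemma funpow_fmap_in_Tor: "p \<in> Tor \<Longrightarrow> (f ^^ n) p \<in> Tor"
  by (cases n) (auto simp: fmap_in_Tor)

lemma fmap_surj_Tor:
  assumes "z \<in> Tor"
  obtains \<zeta> where "\<zeta> \<in> Tor" "f \<zeta> = z"
proof -
  obtain a b where z: "z = (a, b)" "0 \<le> a" "a < 1" "0 \<le> b" "b < 1"
    using assms by (auto simp: Tor_def)
  define t where "t = a + of_int \<lceil>E 0 - a\<rceil>"
  have t: "E 0 \<le> t" "t < E 0 + 1" unfolding t_def by linarith+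
  have "continuous_on {0..1} E"
    by (meson DERIV_isCont E_has_deriv continuous_at_imp_continuous_on)
  then obtain x where x: "0 \<le> x" "x \<le> 1" "E x = t"
    using IVT'[of E 0 t 1] t E_lift[of 0] degree_pos by auto
  have "x < 1" using x t E_lift[of 0] degree_pos by (cases "x = 1") auto
  moreover have "frac (E x) = a" using x(3) z by (simp add: t_def)
  moreover have "frac (frac (b - \<tau> x) + \<tau> x) = b"
  proof -
    have "frac (b - \<tau> x) + \<tau> x = b + of_int (- \<lfloor>b - \<tau> x\<rfloor>)"
      by (simp add: frac_def)
    then show ?thesis using z by (simp only: frac_add_of_int_right frac_eq)
  qed
  ultimately show ?thesis
    using that[of "(x, frac (b - \<tau> x))"] x z by (simp add: fmap_def Tor_def frac_lt_1)
qed

lemma funpow_fmap_surj_Tor: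
  assumes "z \<in> Tor"
  obtains \<zeta> where "\<zeta> \<in> Tor" "(f ^^ n) \<zeta> = z"
  using assms
proof (induction n arbitrary: z thesis)
  case (Suc n)
  obtain w where "w \<in> Tor" "f w = z" using fmap_surj_Tor Suc.prems(2) by blast
  moreover obtain \<zeta> where "\<zeta> \<in> Tor" "(f ^^ n) \<zeta> = w" using Suc.IH calculation(1) by blast
  ultimately show ?case using Suc.prems(1) by auto
qed simp

definition preimages :: "nat \<Rightarrow> real \<times> real \<Rightarrow> (real \<times> real) set" where
  "preimages n z = {\<zeta>\<in>Tor. (f ^^ n) \<zeta> = z}"

text \<open>A preimage \<open>(x, s)\<close> of \<open>z\<close> is determined by the integer part of \<open>E x - E 0 \<in> [0, l)\<close>.\<close>

lemma finite_card_preimages_1: "finite (preimages 1 z) \<and> card (preimages 1 z) \<le> l"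
proof -
  define h where "h \<zeta> = nat \<lfloor>E (fst \<zeta>) - E 0\<rfloor>" for \<zeta> :: "real \<times> real"
  have img: "h ` preimages 1 z \<subseteq> {..<l}"
  proof
    fix w assume "w \<in> h ` preimages 1 z"
    then obtain x s where "(x, s) \<in> Tor" "w = h (x, s)" by (auto simp: preimages_def)
    then have "0 \<le> E x - E 0" "E x - E 0 < real l"
      using E_bounds_on_unit_interval[of x] by (auto simp: Tor_def)
    then show "w \<in> {..<l}"
      using \<open>w = h (x, s)\<close> by (simp add: h_def nat_less_iff floor_less_iff)
  qed
  have inj: "inj_on h (preimages 1 z)"
  proof (rule inj_onI)
    fix p q assume p: "p \<in> preimages 1 z" and q: "q \<in> preimages 1 z" and "h p = h q"
    obtain x s y t where pq: "p = (x, s)" "q = (y, t)" by (cases p, cases q)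
    have unit: "0 \<le> x" "x < 1" "0 \<le> s" "s < 1" "0 \<le> y" "y < 1" "0 \<le> t" "t < 1"
      using p q pq by (auto simp: preimages_def Tor_def)
    have fr: "frac (E x) = frac (E y)" "frac (s + \<tau> x) = frac (t + \<tau> y)"
      using p q pq by (auto simp: preimages_def fmap_def)
    have "\<lfloor>E x - E 0\<rfloor> = \<lfloor>E y - E 0\<rfloor>"
      using \<open>h p = h q\<close> pq E_bounds_on_unit_interval unit by (simp add: h_def eq_nat_nat_iff)
    then have "E x = E y"
      by (intro eq_if_frac_eq_abs_diff_less_1[OF fr(1)]) linarith
    then have "x = y" using strict_mono_E by (simp add: strict_mono_eq)
    then have "s = t"
      using eq_if_frac_eq_abs_diff_less_1[OF fr(2)] unit by simp
    with \<open>x = y\<close> pq show "p = q" by simp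
  qed
  have "finite (preimages 1 z)"
    using inj img by (meson finite_imageD finite_lessThan finite_subset)
  moreover have "card (preimages 1 z) \<le> l"
    using card_inj_on_le[OF inj img] by simp
  ultimately show ?thesis ..
qed

lemma finite_card_preimages: "finite (preimages n z) \<and> card (preimages n z) \<le> l ^ n"
proof (induction n arbitrary: z)
  case 0
  have "preimages 0 z \<subseteq> {z}" by (auto simp: preimages_def)
  then show ?case using card_mono[of "{z}"] by (auto intro: finite_subset)
next
  case (Suc n)
  have split: "preimages (Suc n) z = (\<Union>w\<in>preimages 1 z. preimages n w)"
    by (auto simp: preimages_def funpow_fmap_in_Tor)
  have "card (preimages (Suc n) z) \<le> (\<Sum>w\<in>preimages 1 z. card (preimages n w))"
    unfolding split using finite_card_preimages_1 by (intro card_UN_le) simp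
  also have "\<dots> \<le> (\<Sum>w\<in>preimages 1 z. l ^ n)"
    using Suc.IH by (intro sum_mono) auto
  also have "\<dots> = card (preimages 1 z) * l ^ n" by simp
  also have "\<dots> \<le> l ^ Suc n"
    using finite_card_preimages_1[of z] by simp
  finally show ?case using Suc.IH finite_card_preimages_1 by (simp add: split)
qed

lemma Dfn_scaleR: "Dfn E \<tau> n p (c *\<^sub>R w) = c *\<^sub>R Dfn E \<tau> n p w"
  by (induction n arbitrary: w) (simp_all add: Dfmap_def algebra_simps)

lemma Dfn_inj: "inj (Dfn E \<tau> n p)"
proof (induction n)
  case (Suc n)
  have "inj (Dfmap E \<tau> q)" for q
  proof (rule injI)
    fix w1 w2 assume "Dfmap E \<tau> q w1 = Dfmap E \<tau> q w2"
    moreover have "deriv E (fst q) \<noteq> 0" using deriv_E_ge[of "fst q"] lam_gt_1 by auto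
    ultimately show "w1 = w2" by (cases w1, cases w2) (simp add: Dfmap_def)
  qed
  then show ?case unfolding Dfn.simps by (rule inj_compose[OF _ Suc.IH])
qed simp

lemma Dfn_add: "Dfn E \<tau> (n + m) p = Dfn E \<tau> n ((f ^^ m) p) \<circ> Dfn E \<tau> m p"
  by (induction n) (simp_all add: funpow_add)

lemma Dfn_zero [simp]: "Dfn E \<tau> n p 0 = 0"
  using Dfn_scaleR[of n p 0 0] by simp

lemma sgn_Dfn: "sgn (Dfn E \<tau> n p w) = Dfn E \<tau> n p (inverse (norm (Dfn E \<tau> n p w)) *\<^sub>R w)"
  by (simp only: sgn_div_norm Dfn_scaleR)

lemma Dfn_eq_0_iff: "Dfn E \<tau> n p w = 0 \<longleftrightarrow> w = 0"
  using Dfn_inj[of n p] Dfn_zero by (metis injD)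

lemma scaleR_in_cone:
  assumes "w \<in> cone lam \<rho>"
  shows "c *\<^sub>R w \<in> cone lam \<rho>"
proof -
  obtain \<xi> \<eta> where w: "w = (\<xi>, \<eta>)" "\<bar>\<eta>\<bar> \<le> theta lam \<rho> * \<bar>\<xi>\<bar>"
    using assms by (auto simp: cone_def)
  then have "\<bar>c\<bar> * \<bar>\<eta>\<bar> \<le> \<bar>c\<bar> * (theta lam \<rho> * \<bar>\<xi>\<bar>)"
    by (simp add: mult_left_mono)
  then show ?thesis by (simp add: w cone_def abs_mult algebra_simps)
qed

lemma cone_mono:
  assumes "\<rho>1 \<le> \<rho>2"
  shows "cone lam \<rho>1 \<subseteq> cone lam \<rho>2"
proof -
  have "theta lam \<rho>1 \<le> theta lam \<rho>2"
    using assms lam_gt_1 by (simp add: theta_def divide_right_mono)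
  show ?thesis
  proof
    fix w assume "w \<in> cone lam \<rho>1"
    then obtain \<xi> \<eta> where "w = (\<xi>, \<eta>)" "\<bar>\<eta>\<bar> \<le> theta lam \<rho>1 * \<bar>\<xi>\<bar>"
      by (auto simp: cone_def)
    moreover have "theta lam \<rho>1 * \<bar>\<xi>\<bar> \<le> theta lam \<rho>2 * \<bar>\<xi>\<bar>"
      using \<open>theta lam \<rho>1 \<le> theta lam \<rho>2\<close> by (simp add: mult_right_mono)
    ultimately show "w \<in> cone lam \<rho>2" by (simp add: cone_def)
  qed
qed

lemma Dfmap_cone:
  assumes "S \<le> \<rho>" "w \<in> cone lam \<rho>"
  shows "Dfmap E \<tau> q w \<in> cone lam (S + (\<rho> - S) / lam)"
proof -
  obtain \<xi> \<eta> where w: "w = (\<xi>, \<eta>)" by (cases w)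
  define a b where "a = deriv E (fst q)" and "b = deriv \<tau> (fst q)"
  define \<theta> \<theta>' where "\<theta> = theta lam \<rho>" and "\<theta>' = theta lam (S + (\<rho> - S) / lam)"
  have \<eta>: "\<bar>\<eta>\<bar> \<le> \<theta> * \<bar>\<xi>\<bar>" using assms(2) w by (simp add: cone_def \<theta>_def)
  have a: "lam \<le> a" and b: "\<bar>b\<bar> \<le> S" using deriv_E_ge abs_deriv_tau_le by (simp_all add: a_def b_def)
  have \<theta>'_lam: "\<theta>' * lam = S + \<theta>"
    using lam_gt_1 by (simp add: \<theta>'_def \<theta>_def theta_def field_simps)
  have "0 \<le> \<theta>'" using assms(1) S_nonneg lam_gt_1 by (simp add: \<theta>'_def theta_def)
  have "\<bar>b * \<xi> + \<eta>\<bar> \<le> \<bar>b\<bar> * \<bar>\<xi>\<bar> + \<bar>\<eta>\<bar>" by (metis abs_mult abs_triangle_ineq)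
  also have "\<dots> \<le> (S + \<theta>) * \<bar>\<xi>\<bar>" using b \<eta> by (simp add: distrib_right add_mono mult_right_mono)
  also have "\<dots> = \<theta>' * lam * \<bar>\<xi>\<bar>" by (simp add: \<theta>'_lam)
  also have "\<dots> \<le> \<theta>' * a * \<bar>\<xi>\<bar>"
    using a \<open>0 \<le> \<theta>'\<close> by (intro mult_right_mono mult_left_mono) auto
  also have "\<dots> = \<theta>' * \<bar>a * \<xi>\<bar>" using a lam_gt_1 by (simp add: abs_mult)
  finally show ?thesis by (simp add: w cone_def Dfmap_def a_def b_def \<theta>'_def)
qed

lemma Dfn_cone:
  assumes "S \<le> \<rho>"
  shows "Dfn E \<tau> m p ` cone lam \<rho> \<subseteq> cone lam (S + (\<rho> - S) / lam ^ m)"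
proof (induction m)
  case (Suc m)
  have ge: "S \<le> S + (\<rho> - S) / lam ^ m" using assms lam_gt_1 by simp
  have eq: "S + (S + (\<rho> - S) / lam ^ m - S) / lam = S + (\<rho> - S) / lam ^ Suc m"
    by (simp add: field_simps)
  show ?case
  proof (rule image_subsetI)
    fix w assume "w \<in> cone lam \<rho>"
    then have "Dfn E \<tau> m p w \<in> cone lam (S + (\<rho> - S) / lam ^ m)" using Suc.IH by auto
    from Dfmap_cone[OF ge this, of "(f ^^ m) p"]
    show "Dfn E \<tau> (Suc m) p w \<in> cone lam (S + (\<rho> - S) / lam ^ Suc m)"
      by (simp only: eq Dfn.simps comp_apply)
  qed
qed simp

definition cone_preimages :: "real \<Rightarrow> nat \<Rightarrow> real \<times> real \<Rightarrow> real \<times> real \<Rightarrow> (real \<times> real) set"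
  where "cone_preimages \<rho> n z v = {\<zeta>\<in>Tor. (f ^^ n) \<zeta> = z \<and> v \<in> Dfn E \<tau> n \<zeta> ` cone lam \<rho>}"

lemma cone_preimages_subset: "cone_preimages \<rho> n z v \<subseteq> preimages n z"
  by (auto simp: cone_preimages_def preimages_def)

lemma finite_cone_preimages: "finite (cone_preimages \<rho> n z v)"
  using finite_card_preimages[of n z] by (auto intro: finite_subset[OF cone_preimages_subset])

lemma card_cone_preimages_le: "card (cone_preimages \<rho> n z v) \<le> l ^ n"
proof -
  have "card (cone_preimages \<rho> n z v) \<le> card (preimages n z)"
    using finite_card_preimages[of n z] by (intro card_mono cone_preimages_subset) simp
  then show ?thesis using finite_card_preimages[of n z] by linarith
qed

lemma Ncount_eq_SUP:
  "Ncount E \<tau> lam \<rho> n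
     = (SUP z\<in>Tor. SUP v\<in>{v. norm v = 1}. real (card (cone_preimages \<rho> n z v)))"
  unfolding Ncount_def cone_preimages_def ..

lemma card_cone_preimages_le_Ncount:
  assumes "z \<in> Tor" "norm v = 1"
  shows "real (card (cone_preimages \<rho> n z v)) \<le> Ncount E \<tau> lam \<rho> n"
proof -
  have bound: "real (card (cone_preimages \<rho> n z' v')) \<le> real l ^ n" for z' v'
  proof -
    have "real (card (cone_preimages \<rho> n z' v')) \<le> real (l ^ n)"
      using card_cone_preimages_le[of \<rho> n z' v'] by (simp only: of_nat_le_iff)
    then show ?thesis by simp
  qed
  have inner: "(SUP v\<in>{v. norm v = 1}. real (card (cone_preimages \<rho> n z' v))) \<le> real l ^ n"
    for z'
    using unit_vectors_nonempty bound by (rule cSUP_least)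
  have "real (card (cone_preimages \<rho> n z v))
      \<le> (SUP v\<in>{v. norm v = 1}. real (card (cone_preimages \<rho> n z v)))"
    using assms(2) bound by (intro cSUP_upper bdd_aboveI2[where M = "real l ^ n"]) auto
  also have "\<dots> \<le> Ncount E \<tau> lam \<rho> n"
    unfolding Ncount_eq_SUP using assms(1) inner
    by (intro cSUP_upper bdd_aboveI2[where M = "real l ^ n"]) auto
  finally show ?thesis .
qed

lemma Ncount_least:
  assumes "\<And>z v. z \<in> Tor \<Longrightarrow> norm v = 1 \<Longrightarrow> real (card (cone_preimages \<rho> n z v)) \<le> B"
  shows "Ncount E \<tau> lam \<rho> n \<le> B"
proof -
  have "(0, 0) \<in> Tor" by (simp add: Tor_def)
  then show ?thesis
    unfolding Ncount_eq_SUP using assms unit_vectors_nonempty by (intro cSUP_least) auto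
qed

lemma Ncount_ge_1:
  assumes "0 \<le> \<rho>"
  shows "1 \<le> Ncount E \<tau> lam \<rho> n"
proof -
  have Tor0: "(0, 0) \<in> Tor" by (simp add: Tor_def)
  then obtain \<zeta> where \<zeta>: "\<zeta> \<in> Tor" "(f ^^ n) \<zeta> = (0, 0)" by (rule funpow_fmap_surj_Tor)
  define y where "y = Dfn E \<tau> n \<zeta> (1, 0)"
  have "(1, 0) \<in> cone lam \<rho>" using assms lam_gt_1 by (simp add: cone_def theta_def)
  then have "sgn y \<in> Dfn E \<tau> n \<zeta> ` cone lam \<rho>"
    unfolding y_def sgn_Dfn using scaleR_in_cone by blast
  then have "\<zeta> \<in> cone_preimages \<rho> n (0, 0) (sgn y)"
    using \<zeta> by (simp add: cone_preimages_def)
  then have "0 < card (cone_preimages \<rho> n (0, 0) (sgn y))"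
    using finite_cone_preimages card_gt_0_iff by blast
  then have "1 \<le> real (card (cone_preimages \<rho> n (0, 0) (sgn y)))"
    by simp
  moreover have "y \<noteq> 0"
    unfolding y_def Dfn_eq_0_iff by (simp add: zero_prod_def)
  then have "norm (sgn y) = 1" by (simp add: norm_sgn)
  ultimately show ?thesis
    using card_cone_preimages_le_Ncount[OF Tor0, of "sgn y" \<rho> n] by linarith
qed

lemma Ncount_mono:
  assumes "\<rho>1 \<le> \<rho>2"
  shows "Ncount E \<tau> lam \<rho>1 n \<le> Ncount E \<tau> lam \<rho>2 n"
proof (rule Ncount_least)
  fix z and v :: "real \<times> real" assume "z \<in> Tor" "norm v = 1"
  have "card (cone_preimages \<rho>1 n z v) \<le> card (cone_preimages \<rho>2 n z v)"
    using cone_mono[OF assms] finite_cone_preimages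
    by (intro card_mono) (auto simp: cone_preimages_def)
  then show "real (card (cone_preimages \<rho>1 n z v)) \<le> Ncount E \<tau> lam \<rho>2 n"
    using card_cone_preimages_le_Ncount[OF \<open>z \<in> Tor\<close> \<open>norm v = 1\<close>, of \<rho>2 n] by linarith
qed

lemma funpow_image_cone_preimages:
  assumes "S \<le> R"
  shows "(f ^^ m) ` cone_preimages R (n + m) z v \<subseteq> cone_preimages (S + (R - S) / lam ^ m) n z v"
proof
  fix w assume "w \<in> (f ^^ m) ` cone_preimages R (n + m) z v"
  then obtain \<zeta> c where \<zeta>: "\<zeta> \<in> Tor" "(f ^^ (n + m)) \<zeta> = z" "c \<in> cone lam R"
    "v = Dfn E \<tau> (n + m) \<zeta> c" "w = (f ^^ m) \<zeta>"
    by (auto simp: cone_preimages_def)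
  have "Dfn E \<tau> m \<zeta> c \<in> cone lam (S + (R - S) / lam ^ m)"
    using Dfn_cone[OF assms] \<zeta>(3) by blast
  moreover have "v = Dfn E \<tau> n w (Dfn E \<tau> m \<zeta> c)" using \<zeta> by (simp add: Dfn_add)
  ultimately show "w \<in> cone_preimages (S + (R - S) / lam ^ m) n z v"
    using \<zeta> funpow_fmap_in_Tor by (auto simp: cone_preimages_def funpow_add)
qed

text \<open>Since \<open>Df\<^sup>n(w)\<close> is injective, all points of a fibre over \<open>w\<close> see the same vector
  \<open>y = (Df\<^sup>n(w))\<^sup>-\<^sup>1 v\<close>, so the fibre is counted by \<open>N(R, m)\<close> at \<open>(w, y/|y|)\<close>.\<close>

lemma card_fibre_le_Ncount:
  assumes w: "w \<in> (f ^^ m) ` cone_preimages R (n + m) z v" and v: "norm v = 1"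
  shows "real (card {\<zeta>\<in>cone_preimages R (n + m) z v. (f ^^ m) \<zeta> = w}) \<le> Ncount E \<tau> lam R m"
proof -
  obtain \<zeta>0 c0 where \<zeta>0: "\<zeta>0 \<in> Tor" "c0 \<in> cone lam R" "v = Dfn E \<tau> (n + m) \<zeta>0 c0"
    "w = (f ^^ m) \<zeta>0"
    using w by (auto simp: cone_preimages_def)
  define y where "y = Dfn E \<tau> m \<zeta>0 c0"
  have vy: "v = Dfn E \<tau> n w y" using \<zeta>0 by (simp add: Dfn_add y_def)
  then have "y \<noteq> 0" using v by auto
  have "{\<zeta>\<in>cone_preimages R (n + m) z v. (f ^^ m) \<zeta> = w} \<subseteq> cone_preimages R m w (sgn y)"
  proof
    fix \<zeta> assume "\<zeta> \<in> {\<zeta>\<in>cone_preimages R (n + m) z v. (f ^^ m) \<zeta> = w}"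
    then obtain c where c: "\<zeta> \<in> Tor" "c \<in> cone lam R" "v = Dfn E \<tau> (n + m) \<zeta> c"
      "(f ^^ m) \<zeta> = w"
      by (auto simp: cone_preimages_def)
    then have "Dfn E \<tau> m \<zeta> c = y"
      using vy Dfn_inj[of n w] by (simp add: Dfn_add inj_eq)
    then have "sgn y = Dfn E \<tau> m \<zeta> (inverse (norm y) *\<^sub>R c)"
      using sgn_Dfn[of m \<zeta> c] by simp
    then show "\<zeta> \<in> cone_preimages R m w (sgn y)"
      using c scaleR_in_cone by (auto simp: cone_preimages_def)
  qed
  then have "card {\<zeta>\<in>cone_preimages R (n + m) z v. (f ^^ m) \<zeta> = w}
      \<le> card (cone_preimages R m w (sgn y))"
    by (intro card_mono finite_cone_preimages)
  moreover have "w \<in> Tor" using \<zeta>0 funpow_fmap_in_Tor by simp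
  ultimately show ?thesis
    using card_cone_preimages_le_Ncount[of w "sgn y" R m] \<open>y \<noteq> 0\<close>
    by (simp add: norm_sgn)
qed

lemma Ncount_add_le:
  assumes "S \<le> R"
  shows "Ncount E \<tau> lam R (n + m) \<le> Ncount E \<tau> lam (S + (R - S) / lam ^ m) n * Ncount E \<tau> lam R m"
proof (rule Ncount_least)
  fix z and v :: "real \<times> real" assume z: "z \<in> Tor" and v: "norm v = 1"
  have N_nonneg: "0 \<le> Ncount E \<tau> lam R m"
    using Ncount_ge_1[of R m] assms S_nonneg by simp
  have "real (card (cone_preimages R (n + m) z v))
      \<le> real (card (cone_preimages (S + (R - S) / lam ^ m) n z v)) * Ncount E \<tau> lam R m"
    using funpow_image_cone_preimages[OF assms] card_fibre_le_Ncount[OF _ v] N_nonneg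
    by (intro card_le_card_mult_fibre_bound finite_cone_preimages)
  also have "\<dots> \<le> Ncount E \<tau> lam (S + (R - S) / lam ^ m) n * Ncount E \<tau> lam R m"
    using card_cone_preimages_le_Ncount[OF z v] N_nonneg by (rule mult_right_mono)
  finally show "real (card (cone_preimages R (n + m) z v)) \<le> \<dots>" .
qed

lemma contracted_aperture_le:
  assumes "S \<le> R"
  shows "S + (R - S) / lam ^ m \<le> R"
proof -
  have "1 \<le> lam ^ m" using lam_gt_1 by simp
  then have "(R - S) / lam ^ m \<le> (R - S) / 1"
    using assms by (intro divide_left_mono) auto
  then show ?thesis by simp
qed

lemma contracted_aperture_le_eventually:
  assumes "S < R2"
  obtains m where "S + (R1 - S) / lam ^ m \<le> R2"
proof -
  obtain m where "(R1 - S) / (R2 - S) < lam ^ m"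
    using real_arch_pow[OF lam_gt_1] by blast
  then have "R1 - S < lam ^ m * (R2 - S)"
    using assms by (simp add: pos_divide_less_eq)
  then have "(R1 - S) / lam ^ m < R2 - S"
    using lam_gt_1 by (simp add: pos_divide_less_eq mult.commute)
  then show ?thesis using that[of m] by simp
qed

lemma Ncount_contracted_mult_le:
  assumes "S \<le> R"
  shows "Ncount E \<tau> lam (S + (R - S) / lam ^ m) n * Ncount E \<tau> lam R m
    \<le> Ncount E \<tau> lam R n * Ncount E \<tau> lam R m"
proof (rule mult_right_mono)
  show "Ncount E \<tau> lam (S + (R - S) / lam ^ m) n \<le> Ncount E \<tau> lam R n"
    using contracted_aperture_le[OF assms] by (rule Ncount_mono)
  show "0 \<le> Ncount E \<tau> lam R m"
    using Ncount_ge_1[of R m] assms S_nonneg by simp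
qed

lemma Ncount_submultiplicative:
  assumes "S \<le> R"
  shows "Ncount E \<tau> lam R (n + m) \<le> Ncount E \<tau> lam R n * Ncount E \<tau> lam R m"
  using Ncount_add_le[OF assms] Ncount_contracted_mult_le[OF assms] by (rule order_trans)

lemma Ncount_root_tendsto:
  assumes "S \<le> R"
  shows "(\<lambda>n. Ncount E \<tau> lam R n powr (1 / real n))
    \<longlonglongrightarrow> (INF n\<in>{1..}. Ncount E \<tau> lam R n powr (1 / real n))"
proof (rule submultiplicative_root_tendsto)
  show "Ncount E \<tau> lam R (n + m) \<le> Ncount E \<tau> lam R n * Ncount E \<tau> lam R m" for n m
    using assms by (rule Ncount_submultiplicative)
  show "1 \<le> Ncount E \<tau> lam R n" for n
    using assms S_nonneg by (simp add: Ncount_ge_1)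
qed

lemma INF_Ncount_root_le:
  assumes "S \<le> R1" "S < R2"
  shows "(INF n\<in>{1..}. Ncount E \<tau> lam R1 n powr (1 / real n))
    \<le> (INF n\<in>{1..}. Ncount E \<tau> lam R2 n powr (1 / real n))"
proof -
  obtain m where "S + (R1 - S) / lam ^ m \<le> R2"
    using contracted_aperture_le_eventually[OF assms(2)] .
  then have mono: "Ncount E \<tau> lam (S + (R1 - S) / lam ^ m) j \<le> Ncount E \<tau> lam R2 j" for j
    by (rule Ncount_mono)
  have ge_1: "1 \<le> Ncount E \<tau> lam R1 n" "1 \<le> Ncount E \<tau> lam R2 n" for n
    using assms S_nonneg by (simp_all add: Ncount_ge_1)
  have "Ncount E \<tau> lam R1 (j + m) \<le> Ncount E \<tau> lam R2 j * Ncount E \<tau> lam R1 m" for j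
    using Ncount_add_le[OF assms(1), of j m] mult_right_mono[OF mono, of "Ncount E \<tau> lam R1 m" j]
      ge_1(1)[of m] by linarith
  moreover have "0 < Ncount E \<tau> lam R1 n" for n using ge_1(1)[of n] by linarith
  ultimately show ?thesis
    using ge_1(2) assms
    by (intro root_limit_le_of_shifted_le[OF Ncount_root_tendsto Ncount_root_tendsto]) auto
qed

lemma INF_Ncount_root_eq:
  assumes "S < R1" "S < R2"
  shows "(INF n\<in>{1..}. Ncount E \<tau> lam R1 n powr (1 / real n))
    = (INF n\<in>{1..}. Ncount E \<tau> lam R2 n powr (1 / real n))"
  using assms by (intro antisym INF_Ncount_root_le) auto

end

lemma skew_product_of_expanding_lift:
  assumes "1 \<le> r" "1 \<le> l" "expanding_lift r E l lam Lam" "C_r r \<tau>" "periodic1 \<tau>"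
  shows "skew_product E \<tau> l lam (sup_norm_deriv \<tau>)"
  using assms unfolding expanding_lift_def
  by unfold_locales (auto intro: C_r_has_real_derivative abs_deriv_le_sup_norm_deriv)

theorem mainTheorem2:
  fixes r l :: nat and E \<tau> :: "real \<Rightarrow> real" and lam Lam R :: real
  assumes "r \<ge> 2" and "l \<ge> 2"
    and "expanding_lift r E l lam Lam"
    and "C_r r \<tau>" and "periodic1 \<tau>"
    and "R > sup_norm_deriv \<tau>"
  shows "(\<forall>n m. n \<ge> 1 \<longrightarrow> m \<ge> 1 \<longrightarrow>
           (let R' = sup_norm_deriv \<tau> + lam powi (- int m) * (R - sup_norm_deriv \<tau>) in
              Ncount E \<tau> lam R (n + m) \<le> Ncount E \<tau> lam R' n * Ncount E \<tau> lam R m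
            \<and> Ncount E \<tau> lam R' n * Ncount E \<tau> lam R m \<le> Ncount E \<tau> lam R n * Ncount E \<tau> lam R m))
       \<and> (\<exists>L. (\<lambda>n. Ncount E \<tau> lam R (Suc n) powr (1 / real (Suc n))) \<longlonglongrightarrow> L
              \<and> L = (INF n\<in>{1..}. Ncount E \<tau> lam R n powr (1 / real n))
              \<and> (\<forall>R2 > sup_norm_deriv \<tau>.
                   (\<lambda>n. Ncount E \<tau> lam R2 (Suc n) powr (1 / real (Suc n))) \<longlonglongrightarrow> L))"
proof -
  define S where "S = sup_norm_deriv \<tau>"
  interpret skew_product E \<tau> l lam S
    unfolding S_def using assms by (intro skew_product_of_expanding_lift) auto
  have R: "S < R" using assms(6) by (simp add: S_def)
  have R': "S + lam powi (- int m) * (R - S) = S + (R - S) / lam ^ m" for m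
    by (simp add: power_int_minus divide_inverse mult.commute)
  have "(\<lambda>n. Ncount E \<tau> lam \<rho> (Suc n) powr (1 / real (Suc n)))
      \<longlonglongrightarrow> (INF n\<in>{1..}. Ncount E \<tau> lam R n powr (1 / real n))" if "S < \<rho>" for \<rho>
    using LIMSEQ_Suc[OF Ncount_root_tendsto[OF less_imp_le[OF that]]]
    unfolding INF_Ncount_root_eq[OF that R] .
  then show ?thesis
    using Ncount_add_le Ncount_contracted_mult_le R
    unfolding S_def[symmetric] R' Let_def by auto
qed

end
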